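(* Let $\mathbf{X}\subset\mathbb{R}^d$ be a finite set with more than $k$ distinct points, let $\ell>k$, and let $T$ be a positive integer with $T\ge\ln\big(\mathbb{E}[\mathrm{cost}(\mathbf{X},C_1)]/\mathrm{OPT}_k(\mathbf{X})\big)$. Then after $T$ rounds of the $k$-means$\parallel$ seeding algorithm with parameter $\ell$, the expected cost satisfies $\mathbb{E}[\mathrm{cost}(\mathbf{X},C_{T+1})]\le9\,\mathrm{OPT}_k(\mathbf{X})$.
   Context: For a finite $C\subset\mathbb{R}^d$, $\mathrm{cost}(x,C)=\min_{c\in C}\|x-c\|^2$, $\mathrm{cost}(\mathbf{Y},C)=\sum_{x\in\mathbf{Y}}\mathrm{cost}(x,C)$, $\mathrm{OPT}_k(\mathbf{X})=\min_{|C|=k}\mathrm{cost}(\mathbf{X},C)$. The $k$-means$\parallel$ seeding algorithm with parameter $\ell$: choose $c$ uniformly at random from $\mathbf{X}$, $C_1=\{c\}$; in round $t=1,2,\dots$, let $\lambda_t(x)=\ell\,\mathrm{cost}(x,C_t)/\mathrm{cost}(\mathbf{X},C_t)$, include each $x\in\mathbf{X}$ in a set $C'$ independently with probability $\min\{1,\lambda_t(x)\}$, and set $C_{t+1}=C_t\cup C'$. The set after $T$ rounds is $C_{T+1}$. *)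

theory Defs
  imports "HOL-Analysis.Analysis" "HOL-Probability.Probability"
begin

definition pcost :: "'a::euclidean_space \<Rightarrow> 'a set \<Rightarrow> real" where
  "pcost x C = Min ((\<lambda>c. (norm (x - c))^2) ` C)"

definition setcost :: "'a::euclidean_space set \<Rightarrow> 'a set \<Rightarrow> real" where
  "setcost Y C = (\<Sum>x\<in>Y. pcost x C)"

definition OPT :: "nat \<Rightarrow> 'a::euclidean_space set \<Rightarrow> real" where
  "OPT k X = Inf {setcost X C | C. finite C \<and> card C = k}"

definition kmpar_init :: "'a::euclidean_space set \<Rightarrow> 'a set pmf" where
  "kmpar_init X = map_pmf (\<lambda>c. {c}) (pmf_of_set X)"

definition kmpar_round :: "real \<Rightarrow> 'a::euclidean_space set \<Rightarrow> 'a set \<Rightarrow> 'a set pmf" where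
  "kmpar_round l X C =
     map_pmf (\<lambda>f. C \<union> {x\<in>X. f x})
       (Pi_pmf X False (\<lambda>x. bernoulli_pmf (min 1 (l * pcost x C / setcost X C))))"

text \<open>kmpar_seed l X t is the distribution of C_{t+1}, the centre set after t rounds.\<close>
fun kmpar_seed :: "real \<Rightarrow> 'a::euclidean_space set \<Rightarrow> nat \<Rightarrow> 'a set pmf" where
  "kmpar_seed l X 0 = kmpar_init X"
| "kmpar_seed l X (Suc t) = bind_pmf (kmpar_seed l X t) (kmpar_round l X)"

end

theory Submission
  imports Defs
begin

text \<open>
  Fix centres \<open>Cs\<close> with \<open>|Cs| \<le> \<ell>\<close> and split \<open>X\<close> into the clusters of \<open>Cs\<close>.
  In a round started from \<open>C\<close>, a point \<open>x\<close> is sampled with probability at least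
  \<open>1 - exp (-\<lambda> x)\<close>, \<open>\<lambda> x = \<ell> cost(x,C) / cost(X,C)\<close>.  For a cluster \<open>P\<close> with centre \<open>c\<close>,
  the cost of \<open>P\<close> after the round is at most the minimum of \<open>cost(P,C)\<close> and of \<open>g x\<close>, the
  cost of \<open>P\<close> once a sampled \<open>x \<in> P\<close> is added; its expectation is at most
  \<open>exp (-\<Lambda>) cost(P,C) + \<psi>(\<Lambda>) \<Sum>\<^sub>x \<lambda> x g x\<close> with \<open>\<Lambda> = \<Sum>\<^sub>x \<lambda> x\<close> and
  \<open>\<psi>(t) = (1 - exp (-t)) / t\<close>.  Since \<open>t exp (-t) \<le> 1/e\<close> the first term is at most
  \<open>cost(X,C) / (e \<ell>)\<close>, and an averaging argument around the centroid of \<open>P\<close> bounds the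
  second by \<open>5 cost(P,{c})\<close>.  Summing over the clusters,
  \<open>E cost(C\<^bsub>t+1\<^esub>) \<le> r E cost(C\<^sub>t) + 5 cost(X,Cs)\<close> with \<open>r = |Cs| / (e \<ell>) \<le> 1/e \<le> 3/8\<close>,
  hence \<open>E cost(C\<^bsub>T+1\<^esub>) \<le> exp (-T) E cost(C\<^sub>1) + 8 cost(X,Cs)\<close>; the hypothesis on \<open>T\<close>
  makes the first term at most \<open>OPT\<^sub>k(X)\<close>.
\<close>

section \<open>Cost of a point with respect to a set of centres\<close>

lemma pcost_le_sq_dist: "finite C \<Longrightarrow> c \<in> C \<Longrightarrow> pcost x C \<le> (norm (x - c))\<^sup>2"
  unfolding pcost_def by (rule Min_le) auto

lemma pcost_attained:
  assumes "finite C" "C \<noteq> {}"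
  shows "\<exists>c\<in>C. pcost x C = (norm (x - c))\<^sup>2"
proof -
  have "pcost x C \<in> (\<lambda>c. (norm (x - c))\<^sup>2) ` C"
    unfolding pcost_def using assms by (intro Min_in) auto
  then show ?thesis by auto
qed

lemma pcost_nonneg: "finite C \<Longrightarrow> C \<noteq> {} \<Longrightarrow> 0 \<le> pcost x C"
  using pcost_attained[of C x] by auto

lemma pcost_antimono: "finite D \<Longrightarrow> C \<subseteq> D \<Longrightarrow> C \<noteq> {} \<Longrightarrow> pcost x D \<le> pcost x C"
  unfolding pcost_def by (rule Min_antimono) auto

lemma pcost_union_le:
  assumes "finite C" "C \<noteq> {}" "finite S" "z \<in> S"
  shows "pcost x (C \<union> S) \<le> min (pcost x C) ((norm (x - z))\<^sup>2)"
  using pcost_antimono[of "C \<union> S" C x] pcost_le_sq_dist[of "C \<union> S" z x] assms by auto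

lemma pcost_le_sq_triangle:
  assumes "finite C" "C \<noteq> {}"
  shows "pcost x C \<le> (sqrt (pcost z C) + norm (x - z))\<^sup>2"
proof -
  obtain c where c: "c \<in> C" "pcost z C = (norm (z - c))\<^sup>2"
    using pcost_attained[OF assms] by blast
  have "sqrt (pcost x C) \<le> norm (x - c)"
    using real_sqrt_le_mono[OF pcost_le_sq_dist[OF assms(1) c(1), of x]] by simp
  also have "\<dots> \<le> norm (x - z) + norm (z - c)"
    using norm_triangle_ineq[of "x - z" "z - c"] by simp
  finally have "sqrt (pcost x C) \<le> sqrt (pcost z C) + norm (x - z)"
    using c(2) by simp
  then have "(sqrt (pcost x C))\<^sup>2 \<le> (sqrt (pcost z C) + norm (x - z))\<^sup>2"
    using pcost_nonneg[OF assms, of x] by (intro power_mono) auto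
  then show ?thesis
    using pcost_nonneg[OF assms, of x] by simp
qed

lemma setcost_nonneg: "finite C \<Longrightarrow> C \<noteq> {} \<Longrightarrow> 0 \<le> setcost Y C"
  unfolding setcost_def by (intro sum_nonneg pcost_nonneg)

definition nearest :: "'a::euclidean_space set \<Rightarrow> 'a \<Rightarrow> 'a" where
  "nearest C x = (SOME c. c \<in> C \<and> pcost x C = (norm (x - c))\<^sup>2)"

lemma nearest_spec:
  assumes "finite C" "C \<noteq> {}"
  shows "nearest C x \<in> C \<and> pcost x C = (norm (x - nearest C x))\<^sup>2"
  unfolding nearest_def by (rule someI_ex) (use pcost_attained[OF assms] in auto)

lemma setcost_sum_nearest_clusters:
  assumes "finite X" "finite Cs" "Cs \<noteq> {}"
  shows "setcost X D = (\<Sum>c\<in>Cs. setcost {x\<in>X. nearest Cs x = c} D)"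
proof -
  have "nearest Cs ` X \<subseteq> Cs"
    using nearest_spec[OF assms(2,3)] by auto
  then show ?thesis
    unfolding setcost_def by (simp add: sum.group[OF assms(1,2)])
qed

lemma setcost_eq_sum_cluster_sq_dist:
  assumes "finite X" "finite Cs" "Cs \<noteq> {}"
  shows "setcost X Cs = (\<Sum>c\<in>Cs. \<Sum>y\<in>{x\<in>X. nearest Cs x = c}. (norm (y - c))\<^sup>2)"
proof -
  have "setcost X Cs = (\<Sum>c\<in>Cs. setcost {x\<in>X. nearest Cs x = c} Cs)"
    by (rule setcost_sum_nearest_clusters[OF assms])
  also have "\<dots> = (\<Sum>c\<in>Cs. \<Sum>y\<in>{x\<in>X. nearest Cs x = c}. (norm (y - c))\<^sup>2)"
    unfolding setcost_def using nearest_spec[OF assms(2,3)] by (intro sum.cong refl) auto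
  finally show ?thesis .
qed

section \<open>Cost of a cluster around its centroid\<close>

lemma sum_sq_dist_centroid:
  fixes P :: "'a::real_inner set"
  assumes "finite P" "P \<noteq> {}"
  defines "\<mu> \<equiv> (1 / real (card P)) *\<^sub>R \<Sum>P"
  shows "(\<Sum>z\<in>P. (norm (y - z))\<^sup>2) = real (card P) * (norm (y - \<mu>))\<^sup>2 + (\<Sum>z\<in>P. (norm (z - \<mu>))\<^sup>2)"
proof -
  let ?n = "real (card P)"
  have expand: "(\<Sum>z\<in>P. (norm (w - z))\<^sup>2) = ?n * (w \<bullet> w) - 2 * (w \<bullet> \<Sum>P) + (\<Sum>z\<in>P. z \<bullet> z)" for w
  proof -
    have "(\<Sum>z\<in>P. (norm (w - z))\<^sup>2) = (\<Sum>z\<in>P. w \<bullet> w - 2 * (w \<bullet> z) + z \<bullet> z)"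
      by (intro sum.cong refl)
        (simp add: power2_norm_eq_inner inner_diff_left inner_diff_right inner_commute)
    then show ?thesis
      by (simp add: sum.distrib sum_subtractf inner_sum_right sum_distrib_left)
  qed
  have "\<Sum>P = ?n *\<^sub>R \<mu>"
    using assms by (simp add: \<mu>_def card_gt_0_iff)
  moreover have "(\<Sum>z\<in>P. (norm (z - \<mu>))\<^sup>2) = (\<Sum>z\<in>P. (norm (\<mu> - z))\<^sup>2)"
    by (simp add: norm_minus_commute)
  ultimately show ?thesis
    unfolding expand
    by (simp add: power2_norm_eq_inner inner_commute algebra_simps)
qed

lemma sq_add_mult_min_sq_diff_le:
  fixes a b s :: real
  assumes "0 \<le> s" "s \<le> a" "s \<le> b"
  shows "(a + b)\<^sup>2 * (min (a\<^sup>2) (b\<^sup>2) - s\<^sup>2) \<le> 4 * a\<^sup>2 * (b\<^sup>2 - s\<^sup>2)"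
proof (cases "b \<le> a")
  case True
  then have "min (a\<^sup>2) (b\<^sup>2) = b\<^sup>2"
    using assms by (simp add: power_mono min_def)
  moreover have "(a + b)\<^sup>2 \<le> (2 * a)\<^sup>2"
    using True assms by (intro power_mono) auto
  moreover have "0 \<le> b\<^sup>2 - s\<^sup>2"
    using assms power_mono[of s b 2] by auto
  ultimately show ?thesis
    using mult_right_mono[of "(a + b)\<^sup>2" "(2 * a)\<^sup>2" "b\<^sup>2 - s\<^sup>2"] by (simp add: power_mult_distrib)
next
  case False
  then have "min (a\<^sup>2) (b\<^sup>2) = a\<^sup>2"
    using assms by (simp add: power_mono min_def)
  moreover have "4 * a\<^sup>2 * (b\<^sup>2 - s\<^sup>2) - (a + b)\<^sup>2 * (a\<^sup>2 - s\<^sup>2)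
      = a\<^sup>2 * (b - a) * (3 * b + a) + s\<^sup>2 * (b - a) * (b + 3 * a)"
    by (simp add: algebra_simps power2_eq_square)
  moreover have "0 \<le> a\<^sup>2 * (b - a) * (3 * b + a) + s\<^sup>2 * (b - a) * (b + 3 * a)"
    using False assms by (intro add_nonneg_nonneg mult_nonneg_nonneg) auto
  ultimately show ?thesis by linarith
qed

lemma card_mult_pcost_le:
  assumes "finite C" "C \<noteq> {}"
  shows "real (card P) * pcost x C \<le> (sqrt (setcost P C) + sqrt (\<Sum>z\<in>P. (norm (x - z))\<^sup>2))\<^sup>2"
proof -
  have "real (card P) * pcost x C \<le> (\<Sum>z\<in>P. (sqrt (pcost z C) + norm (x - z))\<^sup>2)"
    using sum_mono[of P "\<lambda>_. pcost x C"] pcost_le_sq_triangle[OF assms] by simp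
  also have "\<dots> = (L2_set (\<lambda>z. sqrt (pcost z C) + norm (x - z)) P)\<^sup>2"
    unfolding L2_set_def by (simp add: sum_nonneg)
  also have "\<dots> \<le> (L2_set (\<lambda>z. sqrt (pcost z C)) P + L2_set (\<lambda>z. norm (x - z)) P)\<^sup>2"
    by (intro power_mono L2_set_triangle_ineq L2_set_nonneg)
  also have "L2_set (\<lambda>z. sqrt (pcost z C)) P = sqrt (setcost P C)"
    unfolding L2_set_def setcost_def using pcost_nonneg[OF assms] by simp
  also have "L2_set (\<lambda>z. norm (x - z)) P = sqrt (\<Sum>z\<in>P. (norm (x - z))\<^sup>2)"
    unfolding L2_set_def by simp
  finally show ?thesis .
qed

lemma interaction_pointwise_le:
  fixes n S A B d g :: real
  assumes "0 < n" "0 \<le> S" "S \<le> A" "S \<le> B" "0 \<le> d" "g \<le> A" "g \<le> B"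
    and "n * d \<le> (sqrt A + sqrt B)\<^sup>2"
  shows "d * g \<le> S * d + 4 * (A / n) * (B - S)"
proof -
  have "n * (d * g) - n * S * d \<le> (n * d) * (min A B - S)"
    using assms mult_left_mono[of g "min A B" "n * d"] by (simp add: algebra_simps)
  also have "\<dots> \<le> (sqrt A + sqrt B)\<^sup>2 * (min A B - S)"
    using assms by (intro mult_right_mono) auto
  also have "\<dots> \<le> 4 * A * (B - S)"
    using sq_add_mult_min_sq_diff_le[of "sqrt S" "sqrt A" "sqrt B"] assms by simp
  finally have "n * (d * g) \<le> n * S * d + 4 * A * (B - S)"
    by simp
  then show ?thesis
    using assms(1) by (simp add: field_simps)
qed

lemma cluster_interaction_le:
  fixes P C :: "'a::euclidean_space set"
  assumes P: "finite P" and C: "finite C" "C \<noteq> {}"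
  shows "(\<Sum>x\<in>P. pcost x C * (\<Sum>y\<in>P. min (pcost y C) ((norm (y - x))\<^sup>2)))
           \<le> 5 * (\<Sum>y\<in>P. (norm (y - c))\<^sup>2) * setcost P C"
proof (cases "P = {}")
  case True
  then show ?thesis by simp
next
  case False
  define n where "n = real (card P)"
  define \<mu> where "\<mu> = (1 / real (card P)) *\<^sub>R \<Sum>P"
  define S where "S = (\<Sum>z\<in>P. (norm (z - \<mu>))\<^sup>2)"
  define A where "A = setcost P C"
  define B where "B x = (\<Sum>z\<in>P. (norm (x - z))\<^sup>2)" for x
  define d where "d x = pcost x C" for x
  define g where "g x = (\<Sum>y\<in>P. min (d y) ((norm (y - x))\<^sup>2))" for x
  have n: "0 < n"
    using P False by (simp add: n_def card_gt_0_iff)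
  have d: "0 \<le> d x" for x
    using pcost_nonneg[OF C] by (simp add: d_def)
  have A: "0 \<le> A"
    unfolding A_def by (rule setcost_nonneg[OF C])
  have S: "0 \<le> S"
    unfolding S_def by (simp add: sum_nonneg)
  have B_centroid: "B x = n * (norm (x - \<mu>))\<^sup>2 + S" for x
    unfolding B_def S_def n_def \<mu>_def by (rule sum_sq_dist_centroid[OF P False])
  then have S_le_B: "S \<le> B x" for x
    using n by simp
  have sum_B: "(\<Sum>x\<in>P. B x) = 2 * n * S"
    by (simp add: B_centroid sum.distrib sum_distrib_left[symmetric] S_def n_def)
  have sum_d: "(\<Sum>x\<in>P. d x) = A"
    by (simp add: A_def setcost_def d_def)
  have g_le_A: "g x \<le> A" for x
    unfolding g_def A_def setcost_def d_def by (intro sum_mono) simp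
  have g_le_B: "g x \<le> B x" for x
    unfolding g_def B_def by (intro sum_mono) (simp add: norm_minus_commute)
  have "(\<Sum>x\<in>P. d x * g x) \<le> 5 * S * A"
  proof (cases "S \<le> A")
    case True
    have "d x * g x \<le> S * d x + 4 * (A / n) * (B x - S)" for x
      by (rule interaction_pointwise_le[OF n S True S_le_B d g_le_A g_le_B])
        (unfold n_def d_def A_def B_def, rule card_mult_pcost_le[OF C])
    then have "(\<Sum>x\<in>P. d x * g x) \<le> (\<Sum>x\<in>P. S * d x + 4 * (A / n) * (B x - S))"
      by (intro sum_mono)
    also have "\<dots> = S * (\<Sum>x\<in>P. d x) + 4 * (A / n) * (\<Sum>x\<in>P. B x - S)"
      by (simp only: sum.distrib sum_distrib_left)
    also have "\<dots> = S * A + 4 * (A / n) * ((\<Sum>x\<in>P. B x) - n * S)"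
      by (simp add: sum_d sum_subtractf n_def)
    also have "\<dots> = 5 * S * A"
      using n by (simp add: sum_B field_simps)
    finally show ?thesis .
  next
    case False
    have "(\<Sum>x\<in>P. d x * g x) \<le> (\<Sum>x\<in>P. d x * A)"
      by (intro sum_mono mult_left_mono g_le_A d)
    also have "\<dots> = A * A"
      by (simp add: sum_distrib_right[symmetric] sum_d)
    also have "\<dots> \<le> 5 * S * A"
      using False A by (simp add: mult_right_mono)
    finally show ?thesis .
  qed
  also have "\<dots> \<le> 5 * (\<Sum>y\<in>P. (norm (y - c))\<^sup>2) * A"
    using S_le_B[of c] A by (simp add: B_def norm_minus_commute mult_right_mono)
  finally show ?thesis
    unfolding d_def g_def A_def .
qed

section \<open>Independent sampling\<close>

text \<open>The value at \<open>0\<close> is the continuous extension; it is needed for antimonotonicity.\<close>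

definition one_minus_exp_div :: "real \<Rightarrow> real" where
  "one_minus_exp_div t = (if t = 0 then 1 else (1 - exp (- t)) / t)"

lemma one_minus_exp_div_mult: "one_minus_exp_div t * t = 1 - exp (- t)"
  by (simp add: one_minus_exp_div_def)

lemma one_minus_exp_div_nonneg: "0 \<le> t \<Longrightarrow> 0 \<le> one_minus_exp_div t"
  by (simp add: one_minus_exp_div_def)

lemma one_minus_exp_div_antimono:
  assumes "0 \<le> s" "s \<le> t"
  shows "one_minus_exp_div t \<le> one_minus_exp_div s"
proof (cases "s = 0")
  case True
  have "1 - exp (- t) \<le> t"
    using exp_ge_add_one_self[of "- t"] by simp
  then show ?thesis
    using True assms by (simp add: one_minus_exp_div_def divide_le_eq)
next
  case False
  then have pos: "0 < s" "0 < t"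
    using assms by auto
  define \<theta> where "\<theta> = s / t"
  have \<theta>: "0 \<le> \<theta>" "\<theta> \<le> 1" "\<theta> * t = s"
    using pos assms by (auto simp: \<theta>_def)
  have "exp ((1 - \<theta>) *\<^sub>R 0 + \<theta> *\<^sub>R (- t)) \<le> (1 - \<theta>) * exp 0 + \<theta> * exp (- t)"
    using \<theta> by (intro convex_onD[OF exp_convex]) auto
  then have "s / t * (1 - exp (- t)) \<le> 1 - exp (- s)"
    using \<theta> by (simp add: \<theta>_def[symmetric] algebra_simps)
  then show ?thesis
    using pos by (simp add: one_minus_exp_div_def field_simps)
qed

lemma t_mult_exp_neg_le: "(t::real) * exp (- t) \<le> exp (- 1)"
proof -
  have "t * exp (- t) \<le> exp (t - 1) * exp (- t)"
    using exp_ge_add_one_self[of "t - 1"] by (intro mult_right_mono) auto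
  also have "\<dots> = exp (- 1)"
    by (simp add: exp_add[symmetric])
  finally show ?thesis .
qed

lemma finite_set_Pi_pmf:
  fixes q :: "'a \<Rightarrow> 'b::finite pmf"
  assumes "finite A"
  shows "finite (set_pmf (Pi_pmf A d q))"
  unfolding set_Pi_pmf[OF assms] using assms by (intro finite_PiE_dflt) auto

lemma expectation_Pi_pmf_bernoulli_split:
  fixes H :: "('a \<Rightarrow> bool) \<Rightarrow> real"
  assumes "finite X" "a \<in> X" "0 \<le> q a" "q a \<le> 1"
  defines "M \<equiv> \<lambda>A. Pi_pmf A False (\<lambda>x. bernoulli_pmf (q x))"
  shows "measure_pmf.expectation (M X) H
       = q a * measure_pmf.expectation (M (X - {a})) (\<lambda>f. H (f(a := True)))
       + (1 - q a) * measure_pmf.expectation (M (X - {a})) (\<lambda>f. H (f(a := False)))"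
proof -
  have "M X = M (insert a (X - {a}))"
    using assms(2) by (simp add: insert_absorb)
  also have "\<dots> = bind_pmf (bernoulli_pmf (q a)) (\<lambda>y. map_pmf (\<lambda>f. f(a := y)) (M (X - {a})))"
    unfolding M_def using assms(1) by (subst Pi_pmf_insert') (auto simp: map_pmf_def)
  finally have M: "M X = bind_pmf (bernoulli_pmf (q a)) (\<lambda>y. map_pmf (\<lambda>f. f(a := y)) (M (X - {a})))" .
  have "finite (set_pmf (map_pmf (\<lambda>f. f(a := y)) (M (X - {a}))))" for y
    unfolding M_def using assms(1) by (simp add: finite_set_Pi_pmf)
  then show ?thesis
    unfolding M by (subst pmf_expectation_bind[of UNIV]) (use assms(3,4) in \<open>auto simp: UNIV_bool\<close>)
qed

text \<open>\<open>L\<close> and \<open>W\<close> play the roles of \<open>\<Sum> \<lambda>\<close> and \<open>\<Sum> \<lambda> g\<close> over the points other than \<open>a\<close> in the lemma below.\<close>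

lemma Min_sampling_step_le:
  fixes p \<Lambda> L g V W :: real
  assumes "1 - exp (- \<Lambda>) \<le> p" "p \<le> 1" "0 \<le> \<Lambda>" "0 \<le> L" "g \<le> V" "W \<le> L * g"
  defines "\<psi> \<equiv> one_minus_exp_div"
  shows "p * (exp (- L) * g + \<psi> L * W) + (1 - p) * (exp (- L) * V + \<psi> L * W)
       \<le> exp (- (\<Lambda> + L)) * V + \<psi> (\<Lambda> + L) * (\<Lambda> * g + W)"
proof -
  define M where "M = \<Lambda> + L"
  have "(\<psi> L - \<psi> M) * W \<le> (\<psi> L - \<psi> M) * (L * g)"
    using assms one_minus_exp_div_antimono[of L M] by (intro mult_left_mono) (auto simp: M_def)
  also have "\<dots> = (exp (- M) - exp (- L) + \<psi> M * \<Lambda>) * g"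
  proof -
    have "\<psi> L * L = 1 - exp (- L)" "\<psi> M * M = 1 - exp (- M)"
      unfolding \<psi>_def by (rule one_minus_exp_div_mult)+
    then show ?thesis
      unfolding M_def by algebra
  qed
  finally have \<psi>_diff: "(\<psi> L - \<psi> M) * W \<le> (exp (- M) - exp (- L) + \<psi> M * \<Lambda>) * g" .
  have "p * (exp (- L) * g + \<psi> L * W) + (1 - p) * (exp (- L) * V + \<psi> L * W)
      = \<psi> L * W + exp (- L) * (V - p * (V - g))"
    by (simp add: algebra_simps)
  also have "\<dots> \<le> \<psi> L * W + exp (- L) * (V - (1 - exp (- \<Lambda>)) * (V - g))"
    using assms by (intro add_left_mono mult_left_mono) (auto intro: mult_right_mono)
  also have "\<dots> = \<psi> L * W + (exp (- L) - exp (- M)) * g + exp (- M) * V"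
    by (simp add: M_def algebra_simps exp_add[symmetric])
  also have "\<dots> \<le> exp (- M) * V + \<psi> M * (\<Lambda> * g + W)"
    using \<psi>_diff by (simp add: algebra_simps)
  finally show ?thesis
    unfolding M_def .
qed

text \<open>
  Induction removing the point \<open>a\<close> of \<open>P\<close> with the largest \<open>g\<close>: if \<open>a\<close> is sampled,
  \<open>g a\<close> becomes the cap \<open>V\<close> for the remaining points.
\<close>

lemma expectation_Min_sampled_le:
  fixes g lam p :: "'a \<Rightarrow> real"
  assumes "finite P" "finite X" "P \<subseteq> X"
    and "\<And>x. x \<in> P \<Longrightarrow> g x \<le> V"
    and "\<And>x. x \<in> P \<Longrightarrow> 0 \<le> lam x"
    and "\<And>x. x \<in> P \<Longrightarrow> 1 - exp (- lam x) \<le> p x \<and> p x \<le> 1"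
  shows "measure_pmf.expectation (Pi_pmf X False (\<lambda>x. bernoulli_pmf (p x)))
           (\<lambda>f. Min (insert V (g ` {x\<in>P. f x})))
         \<le> exp (- (\<Sum>x\<in>P. lam x)) * V + one_minus_exp_div (\<Sum>x\<in>P. lam x) * (\<Sum>x\<in>P. lam x * g x)"
  using assms
proof (induction P arbitrary: X V rule: finite_remove_induct)
  case empty
  then show ?case by (simp add: one_minus_exp_div_def)
next
  case (remove P)
  have "Max (g ` P) \<in> g ` P"
    using remove.hyps(1,2) by (intro Max_in) auto
  then obtain a where a: "a \<in> P" "g a = Max (g ` P)"
    by (metis imageE)
  have g_le_ga: "g x \<le> g a" if "x \<in> P" for x
    using a remove.hyps(1) that by simp
  define P' where "P' = P - {a}"
  have "finite P'"
    using remove.hyps(1) by (simp add: P'_def)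
  have pa: "1 - exp (- lam a) \<le> p a" "p a \<le> 1" "0 \<le> lam a"
    using remove.prems(4,5) a(1) by auto
  moreover have "exp (- lam a) \<le> 1"
    using pa(3) by simp
  ultimately have "0 \<le> p a"
    by linarith
  define F where "F v f = Min (insert v (g ` {x\<in>P'. f x}))" for v and f :: "'a \<Rightarrow> bool"
  let ?B = "Pi_pmf (X - {a}) False (\<lambda>x. bernoulli_pmf (p x))"
  have sampled_a: "Min (insert V (g ` {x\<in>P. (f(a := True)) x})) = F (g a) f" for f
  proof -
    have "{x\<in>P. (f(a := True)) x} = insert a {x\<in>P'. f x}"
      using a(1) by (auto simp: P'_def)
    then have "Min (insert V (g ` {x\<in>P. (f(a := True)) x})) = min V (F (g a) f)"
      unfolding F_def using \<open>finite P'\<close> by (subst Min_insert) auto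
    moreover have "F (g a) f \<le> g a"
      unfolding F_def using \<open>finite P'\<close> by simp
    ultimately show ?thesis
      using remove.prems(3)[OF a(1)] by simp
  qed
  have unsampled_a: "Min (insert V (g ` {x\<in>P. (f(a := False)) x})) = F V f" for f
    unfolding F_def P'_def by (rule arg_cong[where f = "\<lambda>S. Min (insert V (g ` S))"]) auto
  define L' where "L' = (\<Sum>x\<in>P'. lam x)"
  define W' where "W' = (\<Sum>x\<in>P'. lam x * g x)"
  have "0 \<le> L'"
    unfolding L'_def P'_def using remove.prems(4) by (auto intro: sum_nonneg)
  have "W' \<le> L' * g a"
    unfolding W'_def L'_def sum_distrib_right P'_def
    using remove.prems(4) g_le_ga by (intro sum_mono mult_left_mono) auto
  have IH: "measure_pmf.expectation ?B (F v) \<le> exp (- L') * v + one_minus_exp_div L' * W'"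
    if "v = g a \<or> v = V" for v
    unfolding F_def L'_def W'_def P'_def
    by (rule remove.IH[OF a(1)]) (use remove.prems g_le_ga that a(1) in auto)
  have "measure_pmf.expectation (Pi_pmf X False (\<lambda>x. bernoulli_pmf (p x))) (\<lambda>f. Min (insert V (g ` {x\<in>P. f x})))
      = p a * measure_pmf.expectation ?B (F (g a)) + (1 - p a) * measure_pmf.expectation ?B (F V)"
    using remove.prems(2) a(1)
    by (subst expectation_Pi_pmf_bernoulli_split[where q = p, OF remove.prems(1) _ \<open>0 \<le> p a\<close> pa(2)])
      (auto simp only: sampled_a unsampled_a)
  also have "\<dots> \<le> p a * (exp (- L') * g a + one_minus_exp_div L' * W')
                  + (1 - p a) * (exp (- L') * V + one_minus_exp_div L' * W')"
    using IH pa \<open>0 \<le> p a\<close> by (intro add_mono mult_left_mono) auto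
  also have "\<dots> \<le> exp (- (lam a + L')) * V + one_minus_exp_div (lam a + L') * (lam a * g a + W')"
    using pa \<open>0 \<le> L'\<close> \<open>W' \<le> L' * g a\<close> remove.prems(3) a(1) by (intro Min_sampling_step_le) auto
  also have "lam a + L' = (\<Sum>x\<in>P. lam x)"
    unfolding L'_def P'_def using remove.hyps(1) a(1) by (simp add: sum.remove)
  also have "lam a * g a + W' = (\<Sum>x\<in>P. lam x * g x)"
    unfolding W'_def P'_def using remove.hyps(1) a(1) by (simp add: sum.remove)
  finally show ?case .
qed

section \<open>One round of seeding\<close>

lemma exp_neg_scaled_mult_le:
  fixes l a \<phi> :: real
  assumes "0 < l" "0 \<le> a" "a \<le> \<phi>"
  shows "exp (- (l * a / \<phi>)) * a \<le> \<phi> / (exp 1 * l)"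
proof (cases "\<phi> = 0")
  case True
  then show ?thesis
    using assms by simp
next
  case False
  then have "0 < \<phi>"
    using assms by simp
  have "exp (- (l * a / \<phi>)) * a = \<phi> / l * ((l * a / \<phi>) * exp (- (l * a / \<phi>)))"
    using \<open>0 < \<phi>\<close> assms(1) by (simp add: field_simps)
  also have "\<dots> \<le> \<phi> / l * exp (- 1)"
    using \<open>0 < \<phi>\<close> assms(1) by (intro mult_left_mono t_mult_exp_neg_le) auto
  also have "\<dots> = \<phi> / (exp 1 * l)"
    by (simp add: exp_minus field_simps)
  finally show ?thesis .
qed

lemma setcost_sampled_le_Min:
  assumes "finite X" "P \<subseteq> X" "finite C" "C \<noteq> {}"
  shows "setcost P (C \<union> {x\<in>X. f x})
           \<le> Min (insert (setcost P C) ((\<lambda>x. \<Sum>y\<in>P. min (pcost y C) ((norm (y - x))\<^sup>2)) ` {x\<in>P. f x}))"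
proof -
  have S: "finite {x\<in>X. f x}"
    using assms(1) by simp
  have "setcost P (C \<union> {x\<in>X. f x}) \<le> setcost P C"
    unfolding setcost_def using pcost_antimono[of "C \<union> {x\<in>X. f x}" C] assms(3,4) S
    by (intro sum_mono) auto
  moreover have "setcost P (C \<union> {x\<in>X. f x}) \<le> (\<Sum>y\<in>P. min (pcost y C) ((norm (y - x))\<^sup>2))"
    if "x \<in> P" "f x" for x
    unfolding setcost_def using that assms pcost_union_le[OF assms(3,4) S]
    by (intro sum_mono) auto
  ultimately show ?thesis
    using assms(2) finite_subset[OF assms(2,1)] by (subst Min_ge_iff) auto
qed

lemma expected_cluster_cost_le:
  fixes X P C :: "'a::euclidean_space set"
  assumes X: "finite X" "P \<subseteq> X" and C: "finite C" "C \<noteq> {}" and l: "0 < l"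
  defines "\<phi> \<equiv> setcost X C"
  shows "measure_pmf.expectation (Pi_pmf X False (\<lambda>x. bernoulli_pmf (min 1 (l * pcost x C / \<phi>))))
            (\<lambda>f. setcost P (C \<union> {x\<in>X. f x}))
         \<le> \<phi> / (exp 1 * l) + 5 * (\<Sum>y\<in>P. (norm (y - c))\<^sup>2)"
proof -
  let ?M = "Pi_pmf X False (\<lambda>x. bernoulli_pmf (min 1 (l * pcost x C / \<phi>)))"
  define g where "g x = (\<Sum>y\<in>P. min (pcost y C) ((norm (y - x))\<^sup>2))" for x
  define lam where "lam x = l * pcost x C / \<phi>" for x
  define \<Lambda> where "\<Lambda> = (\<Sum>x\<in>P. lam x)"
  define OPT\<^sub>P where "OPT\<^sub>P = (\<Sum>y\<in>P. (norm (y - c))\<^sup>2)"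
  have P: "finite P"
    using X by (rule finite_subset[rotated])
  have "0 \<le> \<phi>"
    unfolding \<phi>_def by (rule setcost_nonneg[OF C])
  have P_le: "setcost P C \<le> \<phi>"
    unfolding \<phi>_def setcost_def using X pcost_nonneg[OF C] by (intro sum_mono2) auto
  have lam: "0 \<le> lam x" for x
    unfolding lam_def using pcost_nonneg[OF C] \<open>0 \<le> \<phi>\<close> l by simp
  have \<Lambda>: "\<Lambda> = l * setcost P C / \<phi>"
    unfolding \<Lambda>_def lam_def setcost_def by (simp add: sum_divide_distrib sum_distrib_left)
  have "measure_pmf.expectation ?M (\<lambda>f. setcost P (C \<union> {x\<in>X. f x}))
      \<le> measure_pmf.expectation ?M (\<lambda>f. Min (insert (setcost P C) (g ` {x\<in>P. f x})))"
    unfolding g_def using X C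
    by (intro integral_mono integrable_measure_pmf_finite finite_set_Pi_pmf setcost_sampled_le_Min)
  also have "\<dots> \<le> exp (- \<Lambda>) * setcost P C + one_minus_exp_div \<Lambda> * (\<Sum>x\<in>P. lam x * g x)"
    unfolding \<Lambda>_def
  proof (rule expectation_Min_sampled_le[OF P X])
    show "g x \<le> setcost P C" for x
      unfolding g_def setcost_def by (intro sum_mono) simp
    show "1 - exp (- lam x) \<le> min 1 (l * pcost x C / \<phi>) \<and> min 1 (l * pcost x C / \<phi>) \<le> 1" for x
      using exp_ge_add_one_self[of "- lam x"] by (simp add: lam_def)
  qed (rule lam)
  also have "exp (- \<Lambda>) * setcost P C \<le> \<phi> / (exp 1 * l)"
    unfolding \<Lambda> using l setcost_nonneg[OF C] P_le by (rule exp_neg_scaled_mult_le)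
  also have "one_minus_exp_div \<Lambda> * (\<Sum>x\<in>P. lam x * g x) \<le> 5 * OPT\<^sub>P"
  proof -
    have "(\<Sum>x\<in>P. lam x * g x) = l / \<phi> * (\<Sum>x\<in>P. pcost x C * g x)"
      unfolding lam_def by (simp add: sum_distrib_left mult.assoc)
    also have "\<dots> \<le> l / \<phi> * (5 * OPT\<^sub>P * setcost P C)"
      unfolding g_def OPT\<^sub>P_def using l \<open>0 \<le> \<phi>\<close>
      by (intro mult_left_mono cluster_interaction_le[OF P C]) auto
    also have "\<dots> = 5 * OPT\<^sub>P * \<Lambda>"
      unfolding \<Lambda> by simp
    finally have "(\<Sum>x\<in>P. lam x * g x) \<le> 5 * OPT\<^sub>P * \<Lambda>" .
    moreover have "0 \<le> \<Lambda>"
      unfolding \<Lambda>_def using lam by (rule sum_nonneg)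
    ultimately have "one_minus_exp_div \<Lambda> * (\<Sum>x\<in>P. lam x * g x) \<le> one_minus_exp_div \<Lambda> * (5 * OPT\<^sub>P * \<Lambda>)"
      using one_minus_exp_div_nonneg by (intro mult_left_mono)
    also have "\<dots> = 5 * OPT\<^sub>P * (1 - exp (- \<Lambda>))"
      by (simp only: one_minus_exp_div_mult[symmetric]) (simp add: ac_simps)
    also have "\<dots> \<le> 5 * OPT\<^sub>P"
      unfolding OPT\<^sub>P_def by (simp add: sum_nonneg mult_left_le)
    finally show ?thesis .
  qed
  finally show ?thesis
    unfolding OPT\<^sub>P_def by simp
qed

lemma expected_round_cost_le:
  fixes X C Cs :: "'a::euclidean_space set"
  assumes X: "finite X" and C: "finite C" "C \<noteq> {}" and Cs: "finite Cs" "Cs \<noteq> {}" and l: "0 < l"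
  shows "measure_pmf.expectation (kmpar_round l X C) (setcost X)
           \<le> real (card Cs) * setcost X C / (exp 1 * l) + 5 * setcost X Cs"
proof -
  let ?M = "Pi_pmf X False (\<lambda>x. bernoulli_pmf (min 1 (l * pcost x C / setcost X C)))"
  let ?cluster = "\<lambda>c. {x\<in>X. nearest Cs x = c}"
  have "measure_pmf.expectation (kmpar_round l X C) (setcost X)
      = measure_pmf.expectation ?M (\<lambda>f. \<Sum>c\<in>Cs. setcost (?cluster c) (C \<union> {x\<in>X. f x}))"
    unfolding kmpar_round_def by (simp add: setcost_sum_nearest_clusters[OF X Cs])
  also have "\<dots> = (\<Sum>c\<in>Cs. measure_pmf.expectation ?M (\<lambda>f. setcost (?cluster c) (C \<union> {x\<in>X. f x})))"
    using X by (intro Bochner_Integration.integral_sum integrable_measure_pmf_finite finite_set_Pi_pmf)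
  also have "\<dots> \<le> (\<Sum>c\<in>Cs. setcost X C / (exp 1 * l) + 5 * (\<Sum>y\<in>?cluster c. (norm (y - c))\<^sup>2))"
    using X C l by (intro sum_mono expected_cluster_cost_le) auto
  also have "\<dots> = real (card Cs) * setcost X C / (exp 1 * l) + 5 * setcost X Cs"
    by (simp add: sum.distrib sum_distrib_left setcost_eq_sum_cluster_sq_dist[OF X Cs])
  finally show ?thesis .
qed

section \<open>Iterated rounds\<close>

lemma finite_set_kmpar_round: "finite X \<Longrightarrow> finite (set_pmf (kmpar_round l X C))"
  unfolding kmpar_round_def by (simp add: finite_set_Pi_pmf)

lemma set_pmf_kmpar_seed:
  assumes "finite X" "X \<noteq> {}" "C \<in> set_pmf (kmpar_seed l X t)"
  shows "finite C \<and> C \<noteq> {} \<and> C \<subseteq> X"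
  using assms(3)
proof (induction t arbitrary: C)
  case 0
  then show ?case
    using assms(1,2) by (auto simp: kmpar_init_def)
next
  case (Suc t)
  then obtain C0 where "C0 \<in> set_pmf (kmpar_seed l X t)" "C \<in> set_pmf (kmpar_round l X C0)"
    by auto
  moreover have "finite {x\<in>X. f x}" for f
    using assms(1) by simp
  ultimately show ?case
    using Suc.IH by (auto simp: kmpar_round_def)
qed

lemma expected_setcost_seed_nonneg:
  assumes "finite X" "X \<noteq> {}"
  shows "0 \<le> measure_pmf.expectation (kmpar_seed l X t) (setcost X)"
proof (intro integral_nonneg_AE, unfold AE_measure_pmf_iff, intro ballI)
  fix C
  assume "C \<in> set_pmf (kmpar_seed l X t)"
  then show "0 \<le> setcost X C"
    using set_pmf_kmpar_seed[OF assms] setcost_nonneg by blast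
qed

lemma expected_seed_Suc_le:
  fixes X Cs :: "'a::euclidean_space set"
  assumes X: "finite X" "X \<noteq> {}" and Cs: "finite Cs" "Cs \<noteq> {}" and l: "0 < l"
  defines "r \<equiv> real (card Cs) / (exp 1 * l)"
  shows "measure_pmf.expectation (kmpar_seed l X (Suc t)) (setcost X)
           \<le> r * measure_pmf.expectation (kmpar_seed l X t) (setcost X) + 5 * setcost X Cs"
proof -
  let ?p = "kmpar_seed l X t"
  have supp: "set_pmf ?p \<subseteq> Pow X"
    using set_pmf_kmpar_seed[OF X] by auto
  have "measure_pmf.expectation (kmpar_seed l X (Suc t)) (setcost X)
      = (\<Sum>C\<in>Pow X. pmf ?p C *\<^sub>R measure_pmf.expectation (kmpar_round l X C) (setcost X))"
    unfolding kmpar_seed.simps using X(1) by (intro pmf_expectation_bind finite_set_kmpar_round supp) auto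
  also have "\<dots> \<le> (\<Sum>C\<in>Pow X. pmf ?p C * (r * setcost X C + 5 * setcost X Cs))"
  proof (intro sum_mono)
    fix C
    show "pmf ?p C *\<^sub>R measure_pmf.expectation (kmpar_round l X C) (setcost X)
        \<le> pmf ?p C * (r * setcost X C + 5 * setcost X Cs)"
    proof (cases "C \<in> set_pmf ?p")
      case True
      then have "finite C" "C \<noteq> {}"
        using set_pmf_kmpar_seed[OF X] by auto
      then have "measure_pmf.expectation (kmpar_round l X C) (setcost X) \<le> r * setcost X C + 5 * setcost X Cs"
        using expected_round_cost_le[OF X(1) _ _ Cs l] by (simp add: r_def)
      then show ?thesis
        by (simp add: mult_left_mono)
    qed (simp add: set_pmf_eq)
  qed
  also have "\<dots> = r * (\<Sum>C\<in>Pow X. setcost X C * pmf ?p C) + 5 * setcost X Cs * (\<Sum>C\<in>Pow X. pmf ?p C)"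
    by (simp add: sum.distrib sum_distrib_left algebra_simps)
  also have "(\<Sum>C\<in>Pow X. pmf ?p C) = 1"
    using X(1) supp by (intro sum_pmf_eq_1) auto
  also have "(\<Sum>C\<in>Pow X. setcost X C * pmf ?p C) = measure_pmf.expectation ?p (setcost X)"
    using X(1) supp by (intro integral_measure_pmf_real[symmetric]) auto
  finally show ?thesis
    by simp
qed

lemma expected_seed_le_geometric:
  fixes X Cs :: "'a::euclidean_space set"
  assumes X: "finite X" "X \<noteq> {}" and Cs: "finite Cs" "Cs \<noteq> {}" and l: "0 < l"
  defines "r \<equiv> real (card Cs) / (exp 1 * l)"
  assumes r: "r < 1"
  shows "measure_pmf.expectation (kmpar_seed l X t) (setcost X)
           \<le> r ^ t * measure_pmf.expectation (kmpar_seed l X 0) (setcost X) + 5 * setcost X Cs / (1 - r)"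
proof (induction t)
  case 0
  show ?case
    using setcost_nonneg[OF Cs] r by simp
next
  case (Suc t)
  have "0 \<le> r"
    unfolding r_def using l by simp
  have "measure_pmf.expectation (kmpar_seed l X (Suc t)) (setcost X)
      \<le> r * measure_pmf.expectation (kmpar_seed l X t) (setcost X) + 5 * setcost X Cs"
    unfolding r_def by (rule expected_seed_Suc_le[OF X Cs l])
  also have "\<dots> \<le> r * (r ^ t * measure_pmf.expectation (kmpar_seed l X 0) (setcost X)
                      + 5 * setcost X Cs / (1 - r)) + 5 * setcost X Cs"
    using Suc \<open>0 \<le> r\<close> by (intro add_right_mono mult_left_mono)
  also have "\<dots> = r ^ Suc t * measure_pmf.expectation (kmpar_seed l X 0) (setcost X)
                  + 5 * setcost X Cs / (1 - r)"
    using r by (simp add: field_simps)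
  finally show ?case .
qed

lemma exp1_ge_8_div_3: "8 / 3 \<le> exp (1::real)"
proof -
  have "(\<Sum>n<4. inverse (fact n)) \<le> (\<Sum>n. inverse (fact n) :: real)"
    by (intro sum_le_suminf) (use summable_exp[of 1] in auto)
  also have "\<dots> = exp 1"
    by (simp add: exp_def)
  finally show ?thesis
    by (simp add: numeral_eq_Suc)
qed

lemma expected_seed_le_setcost:
  fixes X Cs :: "'a::euclidean_space set"
  assumes X: "finite X" "X \<noteq> {}" and Cs: "finite Cs" "Cs \<noteq> {}" and l: "real (card Cs) \<le> l"
  shows "measure_pmf.expectation (kmpar_seed l X t) (setcost X)
           \<le> exp (- real t) * measure_pmf.expectation (kmpar_seed l X 0) (setcost X) + 8 * setcost X Cs"
proof -
  define r where "r = real (card Cs) / (exp 1 * l)"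
  have "0 < l"
    using Cs l by (simp add: card_gt_0_iff less_le_trans[of 0 "real (card Cs)"])
  then have r: "0 \<le> r" "r \<le> exp (- 1)"
    unfolding r_def using l by (simp_all add: exp_minus field_simps)
  have "exp (- 1) \<le> (3 / 8 :: real)"
    using exp1_ge_8_div_3 by (simp add: exp_minus field_simps)
  with r have "r \<le> 3 / 8"
    by linarith
  have "measure_pmf.expectation (kmpar_seed l X t) (setcost X)
      \<le> r ^ t * measure_pmf.expectation (kmpar_seed l X 0) (setcost X) + 5 * setcost X Cs / (1 - r)"
    unfolding r_def
    by (rule expected_seed_le_geometric[OF X Cs \<open>0 < l\<close>]) (use \<open>r \<le> 3 / 8\<close> in \<open>simp add: r_def[symmetric]\<close>)
  also have "r ^ t * measure_pmf.expectation (kmpar_seed l X 0) (setcost X)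
      \<le> exp (- real t) * measure_pmf.expectation (kmpar_seed l X 0) (setcost X)"
    using power_mono[OF r(2) r(1), of t] expected_setcost_seed_nonneg[OF X, of l 0]
    by (intro mult_right_mono) (simp_all add: exp_of_nat_mult[symmetric])
  also have "5 * setcost X Cs / (1 - r) \<le> 8 * setcost X Cs"
  proof -
    have "0 \<le> setcost X Cs * (3 - 8 * r)"
      using \<open>r \<le> 3 / 8\<close> setcost_nonneg[OF Cs, of X] by simp
    then have "5 * setcost X Cs \<le> 8 * setcost X Cs * (1 - r)"
      by (simp add: algebra_simps)
    then show ?thesis
      using \<open>r \<le> 3 / 8\<close> by (simp add: divide_le_eq)
  qed
  finally show ?thesis
    by simp
qed

section \<open>The optimal cost\<close>

lemma sq_norm_diff_le_twice:
  fixes a b c :: "'a::real_normed_vector"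
  shows "(norm (a - b))\<^sup>2 \<le> 2 * ((norm (a - c))\<^sup>2 + (norm (b - c))\<^sup>2)"
proof -
  have "norm (a - b) \<le> norm (a - c) + norm (b - c)"
    using norm_triangle_ineq[of "a - c" "c - b"] by (simp add: norm_minus_commute)
  then have "(norm (a - b))\<^sup>2 \<le> (norm (a - c) + norm (b - c))\<^sup>2"
    by (intro power_mono) auto
  also have "\<dots> \<le> 2 * ((norm (a - c))\<^sup>2 + (norm (b - c))\<^sup>2)"
    using sum_squares_bound[of "norm (a - c)" "norm (b - c)"]
    by (simp add: algebra_simps power2_eq_square)
  finally show ?thesis .
qed

lemma setcost_ge_quarter_sq_dist:
  fixes X C :: "'a::euclidean_space set"
  assumes X: "finite X" and C: "finite C" "C \<noteq> {}" and card: "card C < card X"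
  shows "\<exists>x\<^sub>1\<in>X. \<exists>x\<^sub>2\<in>X. x\<^sub>1 \<noteq> x\<^sub>2 \<and> (norm (x\<^sub>1 - x\<^sub>2))\<^sup>2 / 4 \<le> setcost X C"
proof -
  have "\<not> inj_on (nearest C) X"
  proof
    assume "inj_on (nearest C) X"
    then have "card X \<le> card C"
      using nearest_spec[OF C] C(1) by (intro card_inj_on_le) auto
    with card show False by simp
  qed
  then obtain x\<^sub>1 x\<^sub>2 where x: "x\<^sub>1 \<in> X" "x\<^sub>2 \<in> X" "x\<^sub>1 \<noteq> x\<^sub>2" "nearest C x\<^sub>1 = nearest C x\<^sub>2"
    by (auto simp: inj_on_def)
  have "(norm (x\<^sub>1 - x\<^sub>2))\<^sup>2 / 4
      \<le> ((norm (x\<^sub>1 - nearest C x\<^sub>1))\<^sup>2 + (norm (x\<^sub>2 - nearest C x\<^sub>1))\<^sup>2) / 2"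
    using sq_norm_diff_le_twice[of x\<^sub>1 x\<^sub>2 "nearest C x\<^sub>1"] by simp
  also have "\<dots> \<le> (\<Sum>x\<in>{x\<^sub>1, x\<^sub>2}. pcost x C)"
    using nearest_spec[OF C, of x\<^sub>1] nearest_spec[OF C, of x\<^sub>2] x(3,4) by simp
  also have "\<dots> \<le> setcost X C"
    unfolding setcost_def using x X pcost_nonneg[OF C] by (intro sum_mono2) auto
  finally show ?thesis
    using x by blast
qed

lemma OPT_pos:
  fixes X :: "'a::euclidean_space set"
  assumes X: "finite X" and k: "0 < k" "k < card X"
  shows "0 < OPT k X"
proof -
  define D where "D = (\<lambda>(a, b). (norm (a - b))\<^sup>2 / 4) ` {p \<in> X \<times> X. fst p \<noteq> snd p}"
  obtain C where C: "C \<subseteq> X" "card C = k"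
    using k by (meson less_imp_le obtain_subset_with_card_n)
  then have "finite C" "C \<noteq> {}"
    using X k finite_subset by auto
  then obtain a b where "a \<in> X" "b \<in> X" "a \<noteq> b"
    using setcost_ge_quarter_sq_dist[OF X] C k by (meson card_mono leD)
  then have "finite D" "D \<noteq> {}"
    unfolding D_def using X by auto
  then have "0 < Min D"
    by (subst Min_gr_iff) (auto simp: D_def)
  also have "Min D \<le> OPT k X"
    unfolding OPT_def
  proof (rule cInf_greatest)
    show "{setcost X C |C. finite C \<and> card C = k} \<noteq> {}"
      using \<open>finite C\<close> C by auto
    fix s
    assume "s \<in> {setcost X C |C. finite C \<and> card C = k}"
    then obtain C' where C': "finite C'" "card C' = k" "s = setcost X C'"
      by auto
    then obtain x\<^sub>1 x\<^sub>2 where "x\<^sub>1 \<in> X" "x\<^sub>2 \<in> X" "x\<^sub>1 \<noteq> x\<^sub>2" "(norm (x\<^sub>1 - x\<^sub>2))\<^sup>2 / 4 \<le> s"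
      using setcost_ge_quarter_sq_dist[OF X C'(1)] k by force
    moreover have "Min D \<le> (norm (x\<^sub>1 - x\<^sub>2))\<^sup>2 / 4"
      using \<open>finite D\<close> calculation(1-3) by (intro Min_le) (auto simp: D_def)
    ultimately show "Min D \<le> s"
      by linarith
  qed
  finally show ?thesis .
qed

lemma expected_seed_le_OPT:
  fixes X :: "'a::euclidean_space set"
  assumes X: "finite X" and k: "0 < k" "k < card X" and l: "real k \<le> l"
  shows "measure_pmf.expectation (kmpar_seed l X t) (setcost X)
           \<le> exp (- real t) * measure_pmf.expectation (kmpar_init X) (setcost X) + 8 * OPT k X"
proof -
  define E where "E = measure_pmf.expectation (kmpar_seed l X t) (setcost X) - exp (- real t) * measure_pmf.expectation (kmpar_init X) (setcost X)"
  have "X \<noteq> {}"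
    using k by auto
  obtain C where "C \<subseteq> X" "card C = k"
    using k by (meson less_imp_le obtain_subset_with_card_n)
  then have nonempty: "{setcost X C |C. finite C \<and> card C = k} \<noteq> {}"
    using X finite_subset by auto
  have "E / 8 \<le> OPT k X"
    unfolding OPT_def
  proof (rule cInf_greatest[OF nonempty])
    fix s
    assume "s \<in> {setcost X C |C. finite C \<and> card C = k}"
    then obtain Cs where Cs: "finite Cs" "card Cs = k" "s = setcost X Cs"
      by auto
    then have "Cs \<noteq> {}"
      using k by auto
    then show "E / 8 \<le> s"
      using expected_seed_le_setcost[OF X \<open>X \<noteq> {}\<close> Cs(1) \<open>Cs \<noteq> {}\<close>, of l t] Cs l
      by (simp add: E_def)
  qed
  then show ?thesis
    by (simp add: E_def)
qed

lemma exp_neg_mult_le_of_ln_div_le: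
  fixes a b t :: real
  assumes "0 \<le> a" "0 < b" "ln (a / b) \<le> t"
  shows "exp (- t) * a \<le> b"
proof (cases "a = 0")
  case False
  then have "a / b \<le> exp t"
    using assms by (metis divide_pos_pos exp_le_cancel_iff exp_ln order_less_le)
  then show ?thesis
    using assms(2) by (simp add: exp_minus field_simps)
qed (use assms in simp)

theorem mainTheorem12:
  fixes X :: "'a::euclidean_space set" and k T :: nat and l :: real
  assumes "finite X" and "0 < k" and "card X > k" and "l > real k" and "T \<ge> 1"
    and "real T \<ge> ln (measure_pmf.expectation (kmpar_init X) (\<lambda>C. setcost X C) / OPT k X)"
  shows "measure_pmf.expectation (kmpar_seed l X T) (\<lambda>C. setcost X C) \<le> 9 * OPT k X"
proof -
  have "X \<noteq> {}"
    using assms(3) by auto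
  have "measure_pmf.expectation (kmpar_seed l X T) (setcost X)
      \<le> exp (- real T) * measure_pmf.expectation (kmpar_init X) (setcost X) + 8 * OPT k X"
    using assms(1-4) by (intro expected_seed_le_OPT) auto
  moreover have "exp (- real T) * measure_pmf.expectation (kmpar_init X) (setcost X) \<le> OPT k X"
    using expected_setcost_seed_nonneg[OF assms(1) \<open>X \<noteq> {}\<close>, of l 0] OPT_pos[OF assms(1-3)] assms(6)
    by (intro exp_neg_mult_le_of_ln_div_le) simp_all
  ultimately show ?thesis
    by simp
qed

end
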